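(* Let $G$ be an infinite group in which every non-abelian subgroup $H$ satisfies $C_G(H)\le H$. Then every normal subgroup of $G$ is abelian or infinite.
   Context: $C_G(H)$ denotes the centralizer of $H$ in $G$. *)

theory Defs
  imports "HOL-Algebra.Algebra"
begin

definition centralizer :: "('a, 'b) monoid_scheme \<Rightarrow> 'a set \<Rightarrow> 'a set" where
  "centralizer G H = {g \<in> carrier G. \<forall>h\<in>H. g \<otimes>\<^bsub>G\<^esub> h = h \<otimes>\<^bsub>G\<^esub> g}"

definition abelian_subset :: "('a, 'b) monoid_scheme \<Rightarrow> 'a set \<Rightarrow> bool" where
  "abelian_subset G H \<longleftrightarrow> (\<forall>x\<in>H. \<forall>y\<in>H. x \<otimes>\<^bsub>G\<^esub> y = y \<otimes>\<^bsub>G\<^esub> x)"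

end

theory Submission
  imports Defs
begin

text \<open>Conjugation gives a map from \<open>G\<close> to the finitely many permutations of a finite
  normal subgroup \<open>N\<close>, whose fibres are cosets of \<open>C_G(N)\<close>; so \<open>C_G(N)\<close> has finite index.
  If \<open>N\<close> were finite and non-abelian, the hypothesis would give \<open>C_G(N) \<subseteq> N\<close>, making
  \<open>C_G(N)\<close> and hence \<open>G\<close> finite.\<close>

context group
begin

lemma conj_agree_imp_in_centralizer:
  assumes "N \<subseteq> carrier G" and g: "g \<in> carrier G" and h: "h \<in> carrier G"
    and agree: "\<And>n. n \<in> N \<Longrightarrow> g \<otimes> n \<otimes> inv g = h \<otimes> n \<otimes> inv h"
  shows "inv g \<otimes> h \<in> centralizer G N"
  unfolding centralizer_def
proof (intro CollectI conjI ballI)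
  show "inv g \<otimes> h \<in> carrier G" using g h by simp
next
  fix n assume n: "n \<in> N"
  with assms(1) have nG: "n \<in> carrier G" by blast
  have "n \<otimes> (inv g \<otimes> h) = inv g \<otimes> (g \<otimes> n \<otimes> inv g) \<otimes> h"
    using g h nG by (simp add: m_assoc[symmetric])
  also have "\<dots> = inv g \<otimes> (h \<otimes> n \<otimes> inv h) \<otimes> h"
    using agree[OF n] by simp
  also have "\<dots> = inv g \<otimes> h \<otimes> n"
    using g h nG by (simp add: m_assoc)
  finally show "inv g \<otimes> h \<otimes> n = n \<otimes> (inv g \<otimes> h)" by simp
qed

lemma finite_carrier_if_finite_normal_finite_centralizer:
  assumes "N \<lhd> G" and "finite N" and "finite (centralizer G N)"
  shows "finite (carrier G)"
proof -
  have NG: "N \<subseteq> carrier G"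
    using normal_imp_subgroup[OF assms(1)] subgroup.subset by blast
  define conj where "conj g = (\<lambda>n\<in>N. g \<otimes> n \<otimes> inv g)" for g
  have "conj ` carrier G \<subseteq> N \<rightarrow>\<^sub>E N"
    using assms(1) normal_inv_iff by (auto simp: conj_def)
  hence finite_image: "finite (conj ` carrier G)"
    by (rule finite_subset) (simp add: finite_PiE assms(2))
  have finite_fibre: "finite (conj -` {conj g} \<inter> carrier G)" if g: "g \<in> carrier G" for g
  proof (rule finite_subset)
    show "conj -` {conj g} \<inter> carrier G \<subseteq> (\<otimes>) g ` centralizer G N"
    proof
      fix h assume "h \<in> conj -` {conj g} \<inter> carrier G"
      hence h: "h \<in> carrier G" and same_conj: "conj h = conj g" by auto
      have "g \<otimes> n \<otimes> inv g = h \<otimes> n \<otimes> inv h" if "n \<in> N" for n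
        using fun_cong[OF same_conj, of n] that by (simp add: conj_def)
      hence "inv g \<otimes> h \<in> centralizer G N"
        by (rule conj_agree_imp_in_centralizer[OF NG g h])
      moreover have "h = g \<otimes> (inv g \<otimes> h)"
        using g h by (simp add: m_assoc[symmetric])
      ultimately show "h \<in> (\<otimes>) g ` centralizer G N" by blast
    qed
    show "finite ((\<otimes>) g ` centralizer G N)" using assms(3) by simp
  qed
  have "finite (conj -` (conj ` carrier G) \<inter> carrier G)"
    using finite_image by (rule finite_finite_vimage_IntI) (auto intro: finite_fibre)
  moreover have "conj -` (conj ` carrier G) \<inter> carrier G = carrier G" by blast
  ultimately show ?thesis by simp
qed

end

theorem lemma2p3:
  fixes G (structure)
  assumes "group G"
    and "infinite (carrier G)"
    and "\<And>H. subgroup H G \<Longrightarrow> \<not> abelian_subset G H \<Longrightarrow> centralizer G H \<subseteq> H"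
    and "N \<lhd> G"
  shows "abelian_subset G N \<or> infinite N"
proof (rule ccontr)
  assume "\<not> (abelian_subset G N \<or> infinite N)"
  hence "\<not> abelian_subset G N" and fin: "finite N" by auto
  hence "centralizer G N \<subseteq> N"
    using assms(3) normal_imp_subgroup[OF assms(4)] by blast
  hence "finite (centralizer G N)" using fin finite_subset by blast
  hence "finite (carrier G)"
    using group.finite_carrier_if_finite_normal_finite_centralizer[OF assms(1) assms(4) fin] by blast
  thus False using assms(2) by simp
qed

end
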